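(* Let $\mathcal{X}$ and $\mathcal{Y}$ be finite sets with $2 \le |\mathcal{X}|,|\mathcal{Y}| < \infty$, and let $X,Y$ have joint pmf $P_{X,Y}$ with $P_X(x)>0$ for all $x\in\mathcal{X}$ and $P_Y(y)>0$ for all $y\in\mathcal{Y}$. Writing $\eta_{\chi^2}=\eta_{\chi^2}(P_X,P_{Y|X})$ and $\eta_{\mathrm{KL}}=\eta_{\mathrm{KL}}(P_X,P_{Y|X})$, we have $$\eta_{\chi^2}\le\eta_{\mathrm{KL}}\le \frac{2\,\eta_{\chi^2}}{\phi\!\left(\max_{A\subseteq\mathcal{X}}\min\{P_X(A),1-P_X(A)\}\right)\min_{x\in\mathcal{X}}P_X(x)},$$ where $\phi:[0,\tfrac12]\to\mathbb{R}$ is given by $\phi(p)=\frac{1}{1-2p}\log\frac{1-p}{p}$ for $p\in[0,\tfrac12)$ and $\phi(\tfrac12)=2$.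
   Context: $P_X(A)=\sum_{x\in A}P_X(x)$. Let $W$ be the column stochastic matrix of the channel $P_{Y|X}$ (its $x$th column is $P_{Y|X=x}$), mapping a pmf $R_X$ on $\mathcal{X}$ to $WR_X$. The KL divergence is $D(R_X\|P_X)=\sum_x R_X(x)\log(R_X(x)/P_X(x))$ (natural log), and $\chi^2(R_X\|P_X)=\sum_x (R_X(x)-P_X(x))^2/P_X(x)$. For $D_\bullet\in\{D,\chi^2\}$, the contraction coefficient is $\eta_\bullet(P_X,P_{Y|X})=\sup\{D_\bullet(WR_X\|WP_X)/D_\bullet(R_X\|P_X): R_X \text{ a pmf on } \mathcal{X},\ 0<D_\bullet(R_X\|P_X)<\infty\}$; $\eta_{\mathrm{KL}}$ uses KL divergence and $\eta_{\chi^2}$ uses $\chi^2$-divergence. *)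

theory Defs
  imports "HOL-Analysis.Analysis"
begin

definition is_pmf :: "('a::finite \<Rightarrow> real) \<Rightarrow> bool" where
  "is_pmf R \<longleftrightarrow> (\<forall>x. 0 \<le> R x) \<and> (\<Sum>x\<in>UNIV. R x) = 1"

text \<open>KL divergence (natural log), convention 0 log 0 = 0. Only used with a
  strictly positive reference pmf, so it is always finite.\<close>
definition KL_div :: "('a::finite \<Rightarrow> real) \<Rightarrow> ('a \<Rightarrow> real) \<Rightarrow> real" where
  "KL_div R P = (\<Sum>x\<in>UNIV. if R x = 0 then 0 else R x * ln (R x / P x))"

definition chi2_div :: "('a::finite \<Rightarrow> real) \<Rightarrow> ('a \<Rightarrow> real) \<Rightarrow> real" where
  "chi2_div R P = (\<Sum>x\<in>UNIV. (R x - P x)\<^sup>2 / P x)"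

definition marg_X :: "('x::finite \<Rightarrow> 'y::finite \<Rightarrow> real) \<Rightarrow> 'x \<Rightarrow> real" where
  "marg_X PXY x = (\<Sum>y\<in>UNIV. PXY x y)"

definition marg_Y :: "('x::finite \<Rightarrow> 'y::finite \<Rightarrow> real) \<Rightarrow> 'y \<Rightarrow> real" where
  "marg_Y PXY y = (\<Sum>x\<in>UNIV. PXY x y)"

text \<open>Column stochastic matrix W: entry (y,x) is P_{Y|X}(y|x).\<close>
definition chan :: "('x::finite \<Rightarrow> 'y::finite \<Rightarrow> real) \<Rightarrow> 'y \<Rightarrow> 'x \<Rightarrow> real" where
  "chan PXY y x = PXY x y / marg_X PXY x"

definition apply_chan :: "('y \<Rightarrow> 'x::finite \<Rightarrow> real) \<Rightarrow> ('x \<Rightarrow> real) \<Rightarrow> 'y \<Rightarrow> real" where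
  "apply_chan W R y = (\<Sum>x\<in>UNIV. W y x * R x)"

definition contraction_coeff ::
  "(('x::finite \<Rightarrow> real) \<Rightarrow> ('x \<Rightarrow> real) \<Rightarrow> real) \<Rightarrow> (('y::finite \<Rightarrow> real) \<Rightarrow> ('y \<Rightarrow> real) \<Rightarrow> real)
    \<Rightarrow> ('x \<Rightarrow> real) \<Rightarrow> ('y \<Rightarrow> 'x \<Rightarrow> real) \<Rightarrow> real" where
  "contraction_coeff DvX DvY PX W =
     Sup {DvY (apply_chan W R) (apply_chan W PX) / DvX R PX | R. is_pmf R \<and> 0 < DvX R PX}"

definition eta_KL :: "('x::finite \<Rightarrow> real) \<Rightarrow> ('y::finite \<Rightarrow> 'x \<Rightarrow> real) \<Rightarrow> real" where
  "eta_KL PX W = contraction_coeff KL_div KL_div PX W"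

definition eta_chi2 :: "('x::finite \<Rightarrow> real) \<Rightarrow> ('y::finite \<Rightarrow> 'x \<Rightarrow> real) \<Rightarrow> real" where
  "eta_chi2 PX W = contraction_coeff chi2_div chi2_div PX W"

definition phi :: "real \<Rightarrow> real" where
  "phi p = (if p = 1/2 then 2 else (1 / (1 - 2*p)) * ln ((1 - p) / p))"

definition set_prob :: "('a::finite \<Rightarrow> real) \<Rightarrow> 'a set \<Rightarrow> real" where
  "set_prob P A = (\<Sum>x\<in>A. P x)"

end

theory Submission
  imports Defs "HOL-Real_Asymp.Real_Asymp"
begin

text \<open>
  The lower bound is local: moving \<open>P\<close> towards \<open>R\<close> by a factor \<open>e\<close>, both KL divergences
  behave like \<open>e\<^sup>2/2\<close> times the corresponding \<open>\<chi>\<^sup>2\<close> divergences as \<open>e \<rightarrow> 0\<close>.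

  For the upper bound, \<open>KL(WR\<parallel>WP) \<le> \<chi>\<^sup>2(WR\<parallel>WP) \<le> \<eta>\<^sub>\<chi>\<^sub>2 \<chi>\<^sup>2(R\<parallel>P)\<close>, so it suffices to
  control \<open>\<chi>\<^sup>2(R\<parallel>P)\<close> by \<open>KL(R\<parallel>P)\<close>. With \<open>A = {P \<le> R}\<close>, \<open>p = P(A)\<close> and \<open>q = R(A)\<close>,
  \<open>min P \<cdot> \<chi>\<^sup>2(R\<parallel>P) \<le> 2 (q - p)\<^sup>2\<close>. On the other hand, processing \<open>R\<close> and \<open>P\<close> through the
  indicator of \<open>A\<close> and applying the distribution-dependent Pinsker inequality
  \<open>D(q\<parallel>p) \<ge> \<phi>(p) (q - p)\<^sup>2\<close> of Ordentlich and Weinberger gives \<open>KL(R\<parallel>P) \<ge> \<phi>(\<pi>) (q - p)\<^sup>2\<close>,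
  because \<open>\<phi>\<close> is decreasing on \<open>(0, 1/2]\<close> and \<open>\<pi> \<ge> min(p, 1 - p)\<close>, where
  \<open>\<pi> = max_balanced_prob P\<close>.
\<close>

section \<open>The function \<open>phi\<close>\<close>

lemma mult_one_minus_mono:
  fixes s t :: real
  assumes "s \<le> t" "s + t \<le> 1"
  shows "s * (1 - s) \<le> t * (1 - t)"
proof -
  have "t * (1 - t) - s * (1 - s) = (t - s) * (1 - s - t)"
    by (simp add: algebra_simps)
  moreover have "0 \<le> (t - s) * (1 - s - t)"
    using assms by simp
  ultimately show ?thesis by linarith
qed

lemma log_odds_le:
  fixes p :: real
  assumes "0 < p" "p \<le> 1/2"
  shows "ln (1 - p) - ln p \<le> (1 - 2*p) / (2*p*(1 - p))"
proof -
  define m where "m t = (1 - 2*t) / (2*t*(1 - t)) - (ln (1 - t) - ln t)" for t :: real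
  have "m (1/2) \<le> m p"
  proof (rule DERIV_nonpos_imp_nonincreasing[OF assms(2)])
    fix x assume x: "p \<le> x" "x \<le> 1/2"
    hence x0: "0 < x" "x < 1" using assms by auto
    have "DERIV m x :> (-2 * (2*x*(1 - x)) - (1 - 2*x) * (2 - 4*x)) / (2*x*(1 - x))^2
                        - (-1/(1 - x) - 1/x)"
      unfolding m_def using x0 by (auto intro!: derivative_eq_intros simp: power2_eq_square)
    moreover have "(-2 * (2*x*(1 - x)) - (1 - 2*x) * (2 - 4*x)) / (2*x*(1 - x))^2 - (-1/(1 - x) - 1/x)
        = -2 * (1 - 2*x)^2 / (2*x*(1 - x))^2"
    proof -
      have d: "(2*x*(1 - x))^2 \<noteq> 0" "x \<noteq> 0" "1 - x \<noteq> 0"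
        using x0 by auto
      have "-1/(1 - x) - 1/x = -(4*x*(1 - x)) / (2*x*(1 - x))^2"
        using d by (simp add: field_simps power2_eq_square)
      thus ?thesis
        using d(1) by (simp add: diff_divide_distrib[symmetric] algebra_simps power2_eq_square)
    qed
    ultimately show "\<exists>y. DERIV m x :> y \<and> y \<le> 0"
      by (auto simp: divide_nonpos_nonneg)
  qed
  thus ?thesis by (simp add: m_def)
qed

lemma log_odds_ge:
  fixes p :: real
  assumes "0 < p" "p \<le> 1/2"
  shows "2 * (1 - 2*p) \<le> ln (1 - p) - ln p"
proof -
  define k where "k t = ln (1 - t) - ln t - 2 * (1 - 2*t)" for t :: real
  have "k (1/2) \<le> k p"
  proof (rule DERIV_nonpos_imp_nonincreasing[OF assms(2)])
    fix x assume x: "p \<le> x" "x \<le> 1/2"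
    hence x0: "0 < x" "x < 1" using assms by auto
    have "DERIV k x :> -1/(1 - x) - 1/x + 4"
      unfolding k_def using x0 by (auto intro!: derivative_eq_intros)
    moreover have "-1/(1 - x) - 1/x + 4 = - ((1 - 2*x)^2 / (x * (1 - x)))"
      using x0 by (simp add: field_simps power2_eq_square)
    moreover have "0 \<le> (1 - 2*x)^2 / (x * (1 - x))"
      using x0 by simp
    ultimately show "\<exists>y. DERIV k x :> y \<and> y \<le> 0"
      by (metis neg_le_0_iff_le)
  qed
  thus ?thesis by (simp add: k_def)
qed

lemma phi_eq: "0 < p \<Longrightarrow> p < 1/2 \<Longrightarrow> phi p = (ln (1 - p) - ln p) / (1 - 2*p)"
  unfolding phi_def by (simp add: ln_div)

lemma two_le_phi:
  assumes "0 < p" "p \<le> 1/2"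
  shows "2 \<le> phi p"
proof (cases "p = 1/2")
  case False
  with assms show ?thesis
    using log_odds_ge[OF assms] by (simp add: phi_eq pos_le_divide_eq)
qed (simp add: phi_def)

lemma phi_le_inverse:
  assumes "0 < p" "p \<le> 1/2"
  shows "phi p \<le> 1 / (2*p*(1 - p))"
proof (cases "p = 1/2")
  case True
  thus ?thesis by (simp add: phi_def True)
next
  case False
  hence p: "p < 1/2" using assms by simp
  have "phi p = (ln (1 - p) - ln p) / (1 - 2*p)"
    using phi_eq assms p by blast
  also have "\<dots> \<le> ((1 - 2*p) / (2*p*(1 - p))) / (1 - 2*p)"
    by (rule divide_right_mono[OF log_odds_le[OF assms]]) (use p in simp)
  also have "\<dots> = 1 / (2*p*(1 - p))"
    using p by simp
  finally show ?thesis .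
qed

lemma phi_antimono:
  assumes "0 < p" "p \<le> r" "r \<le> 1/2"
  shows "phi r \<le> phi p"
proof (cases "r = 1/2")
  case True
  thus ?thesis using two_le_phi[of p] assms by (simp add: phi_def)
next
  case False
  hence r: "r < 1/2" using assms by simp
  define f where "f t = (ln (1 - t) - ln t) / (1 - 2*t)" for t :: real
  have "f r \<le> f p"
  proof (rule DERIV_nonpos_imp_nonincreasing[OF assms(2)])
    fix x assume x: "p \<le> x" "x \<le> r"
    hence x0: "0 < x" "x < 1/2" using assms r by auto
    have "DERIV f x :> ((-1/(1 - x) - 1/x) * (1 - 2*x) + 2 * (ln (1 - x) - ln x)) / (1 - 2*x)^2"
      unfolding f_def using x0 by (auto intro!: derivative_eq_intros simp: power2_eq_square)
    moreover have "(-1/(1 - x) - 1/x) * (1 - 2*x) = - ((1 - 2*x) / (x * (1 - x)))"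
      using x0 by (simp add: field_simps)
    moreover have "2 * (ln (1 - x) - ln x) \<le> (1 - 2*x) / (x * (1 - x))"
      using log_odds_le[of x] x0 by (simp add: field_simps)
    ultimately show "\<exists>y. DERIV f x :> y \<and> y \<le> 0"
      by (auto intro!: divide_nonpos_nonneg)
  qed
  thus ?thesis using assms r by (simp add: phi_eq f_def)
qed

section \<open>The binary divergence\<close>

definition rel_entr :: "real \<Rightarrow> real \<Rightarrow> real" where
  "rel_entr a b = (if a = 0 then 0 else a * ln (a / b))"

definition bin_KL :: "real \<Rightarrow> real \<Rightarrow> real" where
  "bin_KL q p = rel_entr q p + rel_entr (1 - q) (1 - p)"

lemma bin_KL_complement: "bin_KL (1 - q) (1 - p) = bin_KL q p"
  unfolding bin_KL_def by simp

lemma bin_KL_interior: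
  "0 < q \<Longrightarrow> q < 1 \<Longrightarrow> 0 < p \<Longrightarrow> p < 1 \<Longrightarrow>
    bin_KL q p = q * (ln q - ln p) + (1 - q) * (ln (1 - q) - ln (1 - p))"
  unfolding bin_KL_def rel_entr_def by (simp add: ln_div)

lemma bin_KL_gap_deriv:
  fixes p c t :: real
  assumes "0 < t" "t < 1"
  shows "((\<lambda>t. t * (ln t - ln p) + (1 - t) * (ln (1 - t) - ln (1 - p)) - c * (t - p)^2)
          has_real_derivative ln t - ln (1 - t) - (ln p - ln (1 - p)) - 2 * c * (t - p)) (at t)"
proof -
  have "((\<lambda>t. t * (ln t - ln p) + (1 - t) * (ln (1 - t) - ln (1 - p)) - c * (t - p)^2)
          has_real_derivative ((ln t - ln p) + t * (1/t)) + (- (ln (1 - t) - ln (1 - p))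
            + (1 - t) * (-1/(1 - t))) - c * (2 * (t - p))) (at t)"
    using assms by (auto intro!: derivative_eq_intros)
  thus ?thesis
    using assms by (simp add: algebra_simps)
qed

lemma log_odds_diff_le:
  fixes p t :: real
  assumes "0 < t" "t \<le> p" "p \<le> 1/2"
  shows "ln t - ln (1 - t) - (ln p - ln (1 - p)) \<le> (t - p) / (p * (1 - p))"
proof -
  define k where "k u = ln u - ln (1 - u) - u / (p * (1 - p))" for u :: real
  have "k t \<le> k p"
  proof (rule DERIV_nonneg_imp_nondecreasing[OF assms(2)])
    fix s assume s: "t \<le> s" "s \<le> p"
    hence s0: "0 < s" "s < 1" using assms by auto
    have "DERIV k s :> 1/s + 1/(1 - s) - 1 / (p * (1 - p))"
      unfolding k_def using s0 assms by (auto intro!: derivative_eq_intros)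
    moreover have "1 / (p * (1 - p)) \<le> 1 / (s * (1 - s))"
      using mult_one_minus_mono[of s p] s s0 assms by (intro divide_left_mono) auto
    moreover have "1/s + 1/(1 - s) = 1 / (s * (1 - s))"
      using s0 by (simp add: field_simps)
    ultimately show "\<exists>y. DERIV k s :> y \<and> 0 \<le> y" by auto
  qed
  thus ?thesis
    unfolding k_def by (simp add: diff_divide_distrib)
qed

lemma bin_KL_ge_below:
  fixes p q :: real
  assumes p: "0 < p" "p \<le> 1/2" and q: "0 \<le> q" "q \<le> p"
  shows "(q - p)^2 / (2*p*(1 - p)) \<le> bin_KL q p"
proof (cases "q = 0")
  case True
  have "bin_KL q p = - ln (1 - p)"
    using True p unfolding bin_KL_def rel_entr_def by (simp add: ln_div)
  moreover have "ln (1 - p) \<le> - p"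
    using ln_le_minus_one[of "1 - p"] p by simp
  moreover have "(q - p)^2 / (2*p*(1 - p)) = p / (2 * (1 - p))"
    using True p by (simp add: power2_eq_square)
  moreover have "p / (2 * (1 - p)) \<le> p"
    using p by (simp add: divide_le_eq)
  ultimately show ?thesis by linarith
next
  case False
  hence q0: "0 < q" using q by simp
  define c where "c = 1 / (2*p*(1 - p))"
  define G where "G t = t * (ln t - ln p) + (1 - t) * (ln (1 - t) - ln (1 - p)) - c * (t - p)^2"
    for t :: real
  have "G p \<le> G q"
  proof (rule DERIV_nonpos_imp_nonincreasing[OF q(2)])
    fix t assume t: "q \<le> t" "t \<le> p"
    hence t0: "0 < t" "t < 1" using q0 p by auto
    have "ln t - ln (1 - t) - (ln p - ln (1 - p)) - 2 * c * (t - p) \<le> 0"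
      using log_odds_diff_le[of t p] t0 t p by (simp add: c_def)
    thus "\<exists>y. DERIV G t :> y \<and> y \<le> 0"
      unfolding G_def using bin_KL_gap_deriv[OF t0] by blast
  qed
  moreover have "bin_KL q p = G q + c * (q - p)^2"
    unfolding G_def using bin_KL_interior[of q p] q0 q p by simp
  ultimately show ?thesis
    unfolding c_def G_def by simp
qed

text \<open>The derivative of \<open>t \<mapsto> bin_KL t p - phi p * (t - p)\<^sup>2\<close> is \<open>h\<close>; it is odd about \<open>1/2\<close>,
  concave on \<open>(0, 1/2]\<close>, convex on \<open>[1/2, 1)\<close> and vanishes at \<open>p\<close>, \<open>1/2\<close> and \<open>1 - p\<close>.\<close>
lemma log_odds_phi_gap_sign:
  fixes p t :: real
  assumes p: "0 < p" "p < 1/2"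
  defines "h \<equiv> \<lambda>t. ln t - ln (1 - t) - 2 * phi p * (t - 1/2)"
  shows "p \<le> t \<Longrightarrow> t \<le> 1/2 \<Longrightarrow> 0 \<le> h t"
    and "1/2 \<le> t \<Longrightarrow> t \<le> 1 - p \<Longrightarrow> h t \<le> 0"
    and "1 - p \<le> t \<Longrightarrow> t < 1 \<Longrightarrow> 0 \<le> h t"
proof -
  have "phi p * (1 - 2*p) = ln (1 - p) - ln p"
    using phi_eq p by simp
  hence hp: "h p = 0"
    unfolding h_def by (simp add: algebra_simps)
  have hhalf: "h (1/2) = 0"
    by (simp add: h_def)
  have hsym: "h (1 - t) = - h t" for t
    by (simp add: h_def algebra_simps)
  have hderiv: "(h has_real_derivative 1 / (t * (1 - t)) - 2 * phi p) (at t)" if "0 < t" "t < 1" for t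
  proof -
    have "(h has_real_derivative 1/t + 1/(1 - t) - 2 * phi p) (at t)"
      unfolding h_def using that by (auto intro!: derivative_eq_intros)
    moreover have "1/t + 1/(1 - t) = 1 / (t * (1 - t))"
      using that by (simp add: field_simps)
    ultimately show ?thesis by simp
  qed
  have "convex_on {p..1/2} (\<lambda>t. - h t)"
  proof (rule convex_on_realI[where f' = "\<lambda>t. - (1 / (t * (1 - t)) - 2 * phi p)"])
    show "((\<lambda>t. - h t) has_real_derivative - (1 / (t * (1 - t)) - 2 * phi p)) (at t)"
      if "t \<in> {p..1/2}" for t
      using hderiv[of t] that p by (auto intro!: derivative_eq_intros)
    show "- (1 / (x * (1 - x)) - 2 * phi p) \<le> - (1 / (y * (1 - y)) - 2 * phi p)"
      if "x \<in> {p..1/2}" "y \<in> {p..1/2}" "x \<le> y" for x y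
      using mult_one_minus_mono[of x y] that p by (auto intro!: divide_left_mono)
  qed simp
  hence concave: "concave_on {p..1/2} h"
    by (simp add: convex_on_iff_concave)
  have convex: "convex_on {1/2..<1} h"
  proof (rule convex_on_realI[where f' = "\<lambda>t. 1 / (t * (1 - t)) - 2 * phi p"])
    show "(h has_real_derivative 1 / (t * (1 - t)) - 2 * phi p) (at t)" if "t \<in> {1/2..<1}" for t
      using hderiv that by simp
    show "1 / (x * (1 - x)) - 2 * phi p \<le> 1 / (y * (1 - y)) - 2 * phi p"
      if "x \<in> {1/2..<1}" "y \<in> {1/2..<1}" "x \<le> y" for x y
      using mult_one_minus_mono[of "1 - y" "1 - x"] that
      by (auto intro!: divide_left_mono simp: mult.commute)
  qed simp
  show left: "0 \<le> h t" if "p \<le> t" "t \<le> 1/2" for t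
    using concave_on_ge_min[OF concave, of t] that hp hhalf by simp
  show "h t \<le> 0" if "1/2 \<le> t" "t \<le> 1 - p"
    using left[of "1 - t"] hsym[of t] that by simp
  show "0 \<le> h t" if "1 - p \<le> t" "t < 1"
  proof (cases "t = 1 - p")
    case True
    thus ?thesis using hsym[of p] hp by simp
  next
    case False
    have "(h (1/2) - h (1 - p)) / (1/2 - (1 - p)) \<le> (h (1/2) - h t) / (1/2 - t)"
      by (rule convex_on_slope_le(1)[OF convex]) (use that False p in auto)
    thus ?thesis
      using hhalf hsym[of p] hp that p by (simp add: divide_le_0_iff)
  qed
qed

lemma bin_KL_phi_gap_nonneg:
  fixes p t :: real
  assumes p: "0 < p" "p < 1/2" and t: "p \<le> t" "t < 1"
  shows "0 \<le> t * (ln t - ln p) + (1 - t) * (ln (1 - t) - ln (1 - p)) - phi p * (t - p)^2"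
proof -
  define G where
    "G = (\<lambda>t. t * (ln t - ln p) + (1 - t) * (ln (1 - t) - ln (1 - p)) - phi p * (t - p)^2)"
  have c: "phi p * (1 - 2*p) = ln (1 - p) - ln p"
    using phi_eq p by simp
  define h where "h s = ln s - ln (1 - s) - 2 * phi p * (s - 1/2)" for s
  note h_sign = log_odds_phi_gap_sign[OF p, folded h_def]
  have G': "DERIV G s :> h s" if "0 < s" "s < 1" for s
  proof -
    have eq: "ln s - ln (1 - s) - (ln p - ln (1 - p)) - 2 * phi p * (s - p) = h s"
      unfolding h_def using c by (simp add: algebra_simps)
    show ?thesis
      using bin_KL_gap_deriv[OF that, of p "phi p"] unfolding G_def eq .
  qed
  have Gp: "G p = 0"
    by (simp add: G_def)
  have Gp': "G (1 - p) = 0"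
  proof -
    have "G (1 - p) = (1 - 2*p) * (ln (1 - p) - ln p) - phi p * (1 - 2*p)^2"
      unfolding G_def by (simp add: algebra_simps power2_eq_square)
    thus ?thesis
      using c by (simp add: power2_eq_square)
  qed
  consider "t \<le> 1/2" | "1/2 \<le> t" "t \<le> 1 - p" | "1 - p \<le> t"
    by linarith
  hence "0 \<le> G t"
  proof cases
    case 1
    have "G p \<le> G t"
    proof (rule DERIV_nonneg_imp_nondecreasing[OF t(1)])
      fix x assume "p \<le> x" "x \<le> t"
      thus "\<exists>y. DERIV G x :> y \<and> 0 \<le> y"
        using G'[of x] h_sign(1)[of x] p 1 by (intro exI[of _ "h x"]) auto
    qed
    thus ?thesis using Gp by simp
  next
    case 2
    have "G (1 - p) \<le> G t"
    proof (rule DERIV_nonpos_imp_nonincreasing[OF 2(2)])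
      fix x assume "t \<le> x" "x \<le> 1 - p"
      thus "\<exists>y. DERIV G x :> y \<and> y \<le> 0"
        using G'[of x] h_sign(2)[of x] p 2 by (intro exI[of _ "h x"]) auto
    qed
    thus ?thesis using Gp' by simp
  next
    case 3
    have "G (1 - p) \<le> G t"
    proof (rule DERIV_nonneg_imp_nondecreasing[OF 3])
      fix x assume "1 - p \<le> x" "x \<le> t"
      thus "\<exists>y. DERIV G x :> y \<and> 0 \<le> y"
        using G'[of x] h_sign(3)[of x] p t by (intro exI[of _ "h x"]) auto
    qed
    thus ?thesis using Gp' by simp
  qed
  thus ?thesis
    by (simp add: G_def)
qed

text \<open>For \<open>q = 1\<close> the interior formula for \<open>bin_KL\<close> breaks down (\<open>ln 0\<close>); pass to the limit \<open>t \<rightarrow> 1\<close>.\<close>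
lemma bin_KL_ge_above:
  fixes p q :: real
  assumes p: "0 < p" "p < 1/2" and q: "p \<le> q" "q \<le> 1"
  shows "phi p * (q - p)^2 \<le> bin_KL q p"
proof (cases "q = 1")
  case False
  thus ?thesis
    using bin_KL_phi_gap_nonneg[OF p q(1)] bin_KL_interior[of q p] p q by simp
next
  case True
  define G where "G t = t * (ln t - ln p) + (1 - t) * (ln (1 - t) - ln (1 - p)) - phi p * (t - p)^2"
    for t :: real
  have lim: "(G \<longlongrightarrow> - ln p - phi p * (1 - p)^2) (at_left 1)"
    unfolding G_def using p by real_asymp
  have "eventually (\<lambda>t. 0 \<le> G t) (at_left 1)"
  proof -
    have "eventually (\<lambda>t. t \<in> {p<..<1}) (at_left (1::real))"
      using p by (intro eventually_at_left_real) simp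
    thus ?thesis
      by (rule eventually_mono) (use bin_KL_phi_gap_nonneg[OF p] in \<open>auto simp: G_def\<close>)
  qed
  hence "0 \<le> - ln p - phi p * (1 - p)^2"
    by (rule tendsto_lowerbound[OF lim]) simp
  moreover have "bin_KL q p = - ln p"
    using True p unfolding bin_KL_def rel_entr_def by (simp add: ln_div)
  ultimately show ?thesis
    using True by simp
qed

lemma bin_KL_ge_phi_half:
  fixes p q r :: real
  assumes p: "0 < p" "p \<le> 1/2" and r: "p \<le> r" "r \<le> 1/2" and q: "0 \<le> q" "q \<le> 1"
  shows "phi r * (q - p)^2 \<le> bin_KL q p"
proof -
  have local: "phi r * (q - p)^2 \<le> (q - p)^2 / (2*p*(1 - p))"
  proof -
    have "1 / (2*r*(1 - r)) \<le> 1 / (2*p*(1 - p))"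
      using mult_one_minus_mono[of p r] p r by (intro divide_left_mono) auto
    hence "phi r \<le> 1 / (2*p*(1 - p))"
      using phi_le_inverse[of r] p r by linarith
    thus ?thesis
      using mult_right_mono[of "phi r" "1 / (2*p*(1 - p))" "(q - p)^2"] by simp
  qed
  consider "q \<le> p" | "p \<le> q" "p < 1/2" | "p \<le> q" "p = 1/2"
    using p by linarith
  thus ?thesis
  proof cases
    case 1
    thus ?thesis using bin_KL_ge_below[OF p q(1) 1] local by linarith
  next
    case 2
    have "phi r * (q - p)^2 \<le> phi p * (q - p)^2"
      using phi_antimono[of p r] p r by (simp add: mult_right_mono)
    thus ?thesis using bin_KL_ge_above[OF p(1) 2(2) 2(1) q(2)] by linarith
  next
    case 3
    have "((1 - q) - p)^2 / (2*p*(1 - p)) \<le> bin_KL (1 - q) p"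
      by (rule bin_KL_ge_below) (use p q 3 in auto)
    moreover have "bin_KL (1 - q) p = bin_KL q p"
      unfolding 3(2) using bin_KL_complement[of q "1/2"] by simp
    moreover have "((1 - q) - p)^2 = (q - p)^2"
      using 3 by (simp add: power2_eq_square algebra_simps)
    ultimately show ?thesis using local by simp
  qed
qed

lemma bin_KL_ge_phi:
  fixes p q r :: real
  assumes p: "0 < p" "p < 1" and q: "0 \<le> q" "q \<le> 1" and r: "min p (1 - p) \<le> r" "r \<le> 1/2"
  shows "phi r * (q - p)^2 \<le> bin_KL q p"
proof (cases "p \<le> 1/2")
  case True
  thus ?thesis using bin_KL_ge_phi_half[of p r q] p q r by auto
next
  case False
  have "phi r * ((1 - q) - (1 - p))^2 \<le> bin_KL (1 - q) (1 - p)"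
    by (rule bin_KL_ge_phi_half) (use False p q r in auto)
  thus ?thesis
    by (simp add: bin_KL_complement power2_commute)
qed

section \<open>Divergences between pmfs\<close>

lemma KL_div_eq_sum_rel_entr: "KL_div R P = (\<Sum>x\<in>UNIV. rel_entr (R x) (P x))"
  unfolding KL_div_def rel_entr_def by simp

lemma rel_entr_lower_bound:
  fixes r p a b :: real
  assumes "0 \<le> r" "0 < p" "0 < a" "0 < b"
  shows "r * ln (a / b) + r - p * a / b \<le> rel_entr r p"
proof (cases "r = 0")
  case False
  hence r: "0 < r" using assms by simp
  have "ln (p * a / (r * b)) \<le> p * a / (r * b) - 1"
    using ln_le_minus_one r assms by simp
  moreover have "ln (p * a / (r * b)) = ln p + ln a - ln r - ln b"
    using r assms by (simp add: ln_div ln_mult)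
  ultimately have "r * (1 - p * a / (r * b)) \<le> r * (ln r - ln p - (ln a - ln b))"
    using r by (intro mult_left_mono) auto
  moreover have "r * (1 - p * a / (r * b)) = r - p * a / b"
    using r by (simp add: field_simps)
  moreover have "r * (ln r - ln p - (ln a - ln b)) = rel_entr r p - r * ln (a / b)"
    using r assms by (simp add: rel_entr_def ln_div algebra_simps)
  ultimately show ?thesis
    by linarith
qed (use assms in \<open>simp add: rel_entr_def\<close>)

lemma log_sum_inequality:
  assumes "finite A" "\<And>x. x \<in> A \<Longrightarrow> 0 \<le> R x" "\<And>x. x \<in> A \<Longrightarrow> 0 < P x"
  shows "rel_entr (\<Sum>x\<in>A. R x) (\<Sum>x\<in>A. P x) \<le> (\<Sum>x\<in>A. rel_entr (R x) (P x))"
proof (cases "(\<Sum>x\<in>A. R x) = 0")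
  case True
  hence "\<forall>x\<in>A. R x = 0"
    using sum_nonneg_eq_0_iff[OF assms(1)] assms(2) by blast
  thus ?thesis using True by (simp add: rel_entr_def)
next
  case False
  define a where "a = (\<Sum>x\<in>A. R x)"
  define b where "b = (\<Sum>x\<in>A. P x)"
  have a0: "0 < a"
    using False assms unfolding a_def by (metis order_le_less sum_nonneg)
  hence "A \<noteq> {}" unfolding a_def by auto
  hence b0: "0 < b"
    unfolding b_def using assms by (intro sum_pos) auto
  have "(\<Sum>x\<in>A. R x * ln (a / b) + R x - P x * a / b) \<le> (\<Sum>x\<in>A. rel_entr (R x) (P x))"
    by (rule sum_mono) (use rel_entr_lower_bound assms a0 b0 in auto)
  moreover have "(\<Sum>x\<in>A. R x * ln (a / b) + R x - P x * a / b) = a * ln (a / b) + a - b * a / b"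
    unfolding a_def b_def
    by (simp add: sum.distrib sum_subtractf sum_distrib_right[symmetric] sum_divide_distrib[symmetric])
  moreover have "rel_entr a b = a * ln (a / b)"
    using a0 by (simp add: rel_entr_def)
  ultimately show ?thesis
    using b0 unfolding a_def b_def by simp
qed

lemma sum_Compl_split:
  fixes f :: "'a::finite \<Rightarrow> 'b::comm_monoid_add"
  shows "(\<Sum>x\<in>UNIV. f x) = (\<Sum>x\<in>A. f x) + (\<Sum>x\<in>-A. f x)"
  by (subst sum.union_disjoint[symmetric]) (auto intro: sum.cong)

lemma KL_div_ge_bin_KL:
  fixes R P :: "'a::finite \<Rightarrow> real"
  assumes R: "is_pmf R" and P: "is_pmf P" "\<And>x. 0 < P x"
  shows "bin_KL (set_prob R A) (set_prob P A) \<le> KL_div R P"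
proof -
  have R0: "\<And>x. 0 \<le> R x" using R by (simp add: is_pmf_def)
  have "(\<Sum>x\<in>-A. R x) = 1 - set_prob R A" "(\<Sum>x\<in>-A. P x) = 1 - set_prob P A"
    using sum_Compl_split[of R A] sum_Compl_split[of P A] R P
    by (simp_all add: is_pmf_def set_prob_def)
  moreover have "rel_entr (\<Sum>x\<in>A. R x) (\<Sum>x\<in>A. P x) \<le> (\<Sum>x\<in>A. rel_entr (R x) (P x))"
    "rel_entr (\<Sum>x\<in>-A. R x) (\<Sum>x\<in>-A. P x) \<le> (\<Sum>x\<in>-A. rel_entr (R x) (P x))"
    by (rule log_sum_inequality; use R0 P in simp)+
  ultimately show ?thesis
    unfolding bin_KL_def KL_div_eq_sum_rel_entr set_prob_def
    using sum_Compl_split[of "\<lambda>x. rel_entr (R x) (P x)" A] by simp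
qed

lemma sum_power2_le_power2_sum:
  fixes f :: "'a \<Rightarrow> real"
  assumes "finite A" "\<And>x. x \<in> A \<Longrightarrow> 0 \<le> f x"
  shows "(\<Sum>x\<in>A. (f x)^2) \<le> (\<Sum>x\<in>A. f x)^2"
proof -
  have "(\<Sum>x\<in>A. (f x)^2) \<le> (\<Sum>x\<in>A. f x * (\<Sum>y\<in>A. f y))"
    unfolding power2_eq_square
    by (rule sum_mono) (use assms in \<open>auto intro!: mult_left_mono member_le_sum\<close>)
  also have "\<dots> = (\<Sum>x\<in>A. f x)^2"
    by (simp add: sum_distrib_right[symmetric] power2_eq_square)
  finally show ?thesis .
qed

lemma chi2_div_nonneg: "(\<And>x. 0 < P x) \<Longrightarrow> 0 \<le> chi2_div R P"
  unfolding chi2_div_def by (intro sum_nonneg) (simp add: less_imp_le)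

lemma chi2_div_pos:
  assumes "\<And>x. 0 < P x" "R \<noteq> P"
  shows "0 < chi2_div R P"
proof -
  obtain x where x: "R x \<noteq> P x"
    using assms(2) by blast
  have "(R x - P x)^2 / P x \<le> chi2_div R P"
    unfolding chi2_div_def by (rule member_le_sum) (use assms in \<open>auto simp: less_imp_le\<close>)
  moreover have "0 < (R x - P x)^2 / P x"
    using assms(1)[of x] x by simp
  ultimately show ?thesis by linarith
qed

lemma KL_div_le_chi2_div:
  fixes R P :: "'a::finite \<Rightarrow> real"
  assumes R: "is_pmf R" and P: "is_pmf P" "\<And>x. 0 < P x"
  shows "KL_div R P \<le> chi2_div R P"
proof -
  have term_le: "rel_entr (R x) (P x) \<le> (R x)^2 / P x - R x" for x
  proof (cases "R x = 0")
    case False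
    hence r: "0 < R x" using R by (simp add: is_pmf_def order_less_le)
    have "R x * ln (R x / P x) \<le> R x * (R x / P x - 1)"
      using ln_le_minus_one r P by (intro mult_left_mono) auto
    thus ?thesis using r by (simp add: rel_entr_def power2_eq_square algebra_simps)
  qed (simp add: rel_entr_def)
  have chi2: "(R x - P x)^2 / P x = (R x)^2 / P x - 2 * R x + P x" for x
    using P(2)[of x] by (simp add: field_simps power2_eq_square)
  have "KL_div R P \<le> (\<Sum>x\<in>UNIV. (R x)^2 / P x - R x)"
    unfolding KL_div_eq_sum_rel_entr by (rule sum_mono) (rule term_le)
  also have "\<dots> = chi2_div R P"
    using R P unfolding chi2_div_def chi2
    by (simp add: is_pmf_def sum.distrib sum_subtractf sum_distrib_left[symmetric])
  finally show ?thesis .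
qed

lemma Min_mult_chi2_div_le:
  fixes R P :: "'a::finite \<Rightarrow> real"
  assumes R: "is_pmf R" and P: "is_pmf P" "\<And>x. 0 < P x"
  defines "A \<equiv> {x. P x \<le> R x}"
  shows "Min (range P) * chi2_div R P \<le> 2 * (set_prob R A - set_prob P A)^2"
proof -
  have tv: "(\<Sum>x\<in>-A. P x - R x) = set_prob R A - set_prob P A"
    using sum_Compl_split[of R A] sum_Compl_split[of P A] R P
    by (simp add: is_pmf_def set_prob_def sum_subtractf)
  have "Min (range P) * chi2_div R P = (\<Sum>x\<in>UNIV. (R x - P x)^2 * (Min (range P) / P x))"
    unfolding chi2_div_def by (simp add: sum_distrib_left mult_ac)
  also have "\<dots> \<le> (\<Sum>x\<in>UNIV. (R x - P x)^2)"
  proof (rule sum_mono)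
    fix x
    have "Min (range P) / P x \<le> 1"
      using P(2)[of x] by (simp add: divide_le_eq)
    thus "(R x - P x)^2 * (Min (range P) / P x) \<le> (R x - P x)^2"
      using mult_left_mono[of "Min (range P) / P x" 1 "(R x - P x)^2"]
      by (simp del: times_divide_eq_right)
  qed
  also have "\<dots> = (\<Sum>x\<in>A. (R x - P x)^2) + (\<Sum>x\<in>-A. (P x - R x)^2)"
    using sum_Compl_split[of "\<lambda>x. (R x - P x)^2" A] by (simp add: power2_commute)
  also have "\<dots> \<le> (\<Sum>x\<in>A. R x - P x)^2 + (\<Sum>x\<in>-A. P x - R x)^2"
    by (intro add_mono sum_power2_le_power2_sum) (auto simp: A_def)
  also have "\<dots> = 2 * (set_prob R A - set_prob P A)^2"
    unfolding tv by (simp add: set_prob_def sum_subtractf)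
  finally show ?thesis .
qed

definition max_balanced_prob :: "('a::finite \<Rightarrow> real) \<Rightarrow> real" where
  "max_balanced_prob P = Max ((\<lambda>A. min (set_prob P A) (1 - set_prob P A)) ` UNIV)"

lemma balanced_prob_le_max: "min (set_prob P A) (1 - set_prob P A) \<le> max_balanced_prob P"
  unfolding max_balanced_prob_def by (rule Max_ge) auto

lemma max_balanced_prob_le_half: "max_balanced_prob P \<le> 1/2"
proof -
  have "max_balanced_prob P \<in> (\<lambda>A. min (set_prob P A) (1 - set_prob P A)) ` UNIV"
    unfolding max_balanced_prob_def by (rule Max_in) auto
  then obtain A where "max_balanced_prob P = min (set_prob P A) (1 - set_prob P A)"
    by blast
  thus ?thesis by linarith
qed

lemma set_prob_dominance_bounds:
  fixes R P :: "'a::finite \<Rightarrow> real"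
  assumes R: "is_pmf R" and P: "is_pmf P" "\<And>x. 0 < P x" and "R \<noteq> P"
  defines "A \<equiv> {x. P x \<le> R x}"
  shows "0 < set_prob P A" "set_prob P A < 1"
proof -
  have sums: "set_prob R UNIV = 1" "set_prob P UNIV = 1"
    using R P by (simp_all add: is_pmf_def set_prob_def)
  have "A \<noteq> {}"
  proof
    assume "A = {}"
    hence "set_prob R UNIV < set_prob P UNIV"
      unfolding A_def set_prob_def by (intro sum_strict_mono) (auto simp: not_le)
    thus False using sums by simp
  qed
  thus "0 < set_prob P A"
    unfolding set_prob_def using P by (intro sum_pos) auto
  have "- A \<noteq> {}"
  proof
    assume "- A = {}"
    hence "\<forall>x. 0 \<le> R x - P x" unfolding A_def by auto
    moreover have "(\<Sum>x\<in>UNIV. R x - P x) = 0"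
      using sums by (simp add: set_prob_def sum_subtractf)
    ultimately have "\<forall>x. R x - P x = 0"
      using sum_nonneg_eq_0_iff[of UNIV "\<lambda>x. R x - P x"] by simp
    thus False using \<open>R \<noteq> P\<close> by auto
  qed
  hence "0 < (\<Sum>x\<in>-A. P x)"
    using P by (intro sum_pos) auto
  thus "set_prob P A < 1"
    using sum_Compl_split[of P A] sums by (simp add: set_prob_def)
qed

lemma chi2_div_le_KL_div:
  fixes R P :: "'a::finite \<Rightarrow> real"
  assumes R: "is_pmf R" and P: "is_pmf P" "\<And>x. 0 < P x"
  shows "chi2_div R P * (phi (max_balanced_prob P) * Min (range P)) \<le> 2 * KL_div R P"
proof (cases "R = P")
  case True
  thus ?thesis by (simp add: chi2_div_def KL_div_def sum.neutral)
next
  case False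
  define A where "A = {x. P x \<le> R x}"
  define p where "p = set_prob P A"
  define q where "q = set_prob R A"
  have p: "0 < p" "p < 1"
    using set_prob_dominance_bounds[OF R P False] by (simp_all add: p_def A_def)
  have q: "0 \<le> q" "q \<le> 1"
    using R sum_mono2[of UNIV A R] by (auto simp: q_def set_prob_def is_pmf_def sum_nonneg)
  have r: "min p (1 - p) \<le> max_balanced_prob P" "max_balanced_prob P \<le> 1/2"
    using balanced_prob_le_max[of P A] max_balanced_prob_le_half[of P] by (simp_all add: p_def)
  hence "0 < max_balanced_prob P"
    using p by (auto simp: min_le_iff_disj)
  hence phi_nonneg: "0 \<le> phi (max_balanced_prob P)"
    using two_le_phi[of "max_balanced_prob P"] r(2) by simp
  have "chi2_div R P * Min (range P) \<le> 2 * (q - p)^2"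
    using Min_mult_chi2_div_le[OF R P] by (simp add: A_def p_def q_def mult.commute)
  hence "chi2_div R P * (phi (max_balanced_prob P) * Min (range P))
      \<le> phi (max_balanced_prob P) * (2 * (q - p)^2)"
    using phi_nonneg by (metis mult.left_commute mult_left_mono)
  also have "\<dots> \<le> 2 * bin_KL q p"
    using bin_KL_ge_phi[OF p q r] by simp
  also have "\<dots> \<le> 2 * KL_div R P"
    using KL_div_ge_bin_KL[OF R P, of A] by (simp add: p_def q_def)
  finally show ?thesis .
qed

section \<open>Local behaviour of the KL divergence\<close>

lemma tendsto_rel_entr_perturb:
  fixes a b :: real
  assumes "0 < a"
  shows "((\<lambda>e. ((a + e * b) * ln ((a + e * b) / a) - e * b) / e^2) \<longlongrightarrow> b^2 / (2 * a)) (at_right 0)"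
proof -
  consider "b > 0" | "b < 0" | "b = 0" by linarith
  thus ?thesis
    by cases (use assms in \<open>real_asymp simp: field_simps power2_eq_square\<close>)+
qed

lemma tendsto_KL_div_perturb:
  fixes a b :: "'a::finite \<Rightarrow> real"
  assumes a: "\<And>x. 0 < a x" and b: "(\<Sum>x\<in>UNIV. b x) = 0"
  shows "((\<lambda>e. KL_div (\<lambda>x. a x + e * b x) a / e^2) \<longlongrightarrow> chi2_div (\<lambda>x. a x + b x) a / 2)
           (at_right 0)"
proof -
  have "((\<lambda>e. \<Sum>x\<in>UNIV. ((a x + e * b x) * ln ((a x + e * b x) / a x) - e * b x) / e^2)
      \<longlongrightarrow> (\<Sum>x\<in>UNIV. (b x)^2 / (2 * a x))) (at_right 0)"
    by (intro tendsto_sum tendsto_rel_entr_perturb a)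
  moreover have "(\<Sum>x\<in>UNIV. (b x)^2 / (2 * a x)) = chi2_div (\<lambda>x. a x + b x) a / 2"
    unfolding chi2_div_def by (simp add: sum_divide_distrib ac_simps)
  moreover have "eventually (\<lambda>e. \<forall>x. 0 < a x + e * b x) (at_right (0::real))"
  proof (rule eventually_all_finite)
    fix x
    have "((\<lambda>e. a x + e * b x) \<longlongrightarrow> a x + 0 * b x) (at_right 0)"
      by (intro tendsto_intros)
    thus "eventually (\<lambda>e. 0 < a x + e * b x) (at_right 0)"
      using a by (intro order_tendstoD(1)) auto
  qed
  hence "eventually (\<lambda>e. (\<Sum>x\<in>UNIV. ((a x + e * b x) * ln ((a x + e * b x) / a x) - e * b x) / e^2)
      = KL_div (\<lambda>x. a x + e * b x) a / e^2) (at_right 0)"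
  proof (rule eventually_mono)
    fix e :: real assume pos: "\<forall>x. 0 < a x + e * b x"
    have "KL_div (\<lambda>x. a x + e * b x) a = (\<Sum>x\<in>UNIV. (a x + e * b x) * ln ((a x + e * b x) / a x))"
      unfolding KL_div_def using pos by (intro sum.cong) (auto simp: less_irrefl)
    moreover have "(\<Sum>x\<in>UNIV. e * b x) = 0"
      using b by (simp add: sum_distrib_left[symmetric])
    ultimately show "(\<Sum>x\<in>UNIV. ((a x + e * b x) * ln ((a x + e * b x) / a x) - e * b x) / e^2)
      = KL_div (\<lambda>x. a x + e * b x) a / e^2"
      by (simp add: sum_divide_distrib[symmetric] sum_subtractf)
  qed
  ultimately show ?thesis
    using Lim_transform_eventually by fastforce
qed

section \<open>Channels and contraction coefficients\<close>

lemma apply_chan_pmf: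
  assumes "\<And>y x. 0 \<le> W y x" "\<And>x. (\<Sum>y\<in>UNIV. W y x) = 1" "is_pmf R"
  shows "is_pmf (apply_chan W R)"
proof -
  have "(\<Sum>y\<in>UNIV. apply_chan W R y) = (\<Sum>x\<in>UNIV. (\<Sum>y\<in>UNIV. W y x) * R x)"
    unfolding apply_chan_def by (subst sum.swap) (simp add: sum_distrib_right)
  thus ?thesis
    using assms by (auto simp: is_pmf_def apply_chan_def intro!: sum_nonneg)
qed

lemma apply_chan_mix:
  "apply_chan W (\<lambda>x. P x + e * (R x - P x))
     = (\<lambda>y. apply_chan W P y + e * (apply_chan W R y - apply_chan W P y))"
  unfolding apply_chan_def
  by (rule ext) (simp add: algebra_simps sum.distrib sum_distrib_left sum_subtractf)

lemma is_pmf_mix: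
  assumes "is_pmf P" "is_pmf R" "0 \<le> e" "e \<le> 1"
  shows "is_pmf (\<lambda>x. P x + e * (R x - P x))"
proof -
  have "P x + e * (R x - P x) = (1 - e) * P x + e * R x" for x
    by (simp add: algebra_simps)
  thus ?thesis
    using assms by (simp add: is_pmf_def sum.distrib sum_distrib_left[symmetric])
qed

text \<open>Each term of \<open>\<chi>\<^sup>2(W R \<parallel> W P)\<close> is bounded by Cauchy-Schwarz with weights \<open>W y x P x\<close>.\<close>
lemma chi2_div_apply_chan_le:
  fixes W :: "'y::finite \<Rightarrow> 'x::finite \<Rightarrow> real"
  assumes W: "\<And>y x. 0 \<le> W y x" "\<And>x. (\<Sum>y\<in>UNIV. W y x) = 1"
    and P: "\<And>x. 0 < P x" and WP: "\<And>y. 0 < apply_chan W P y"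
  shows "chi2_div (apply_chan W R) (apply_chan W P) \<le> chi2_div R P"
proof -
  have term_le: "(apply_chan W R y - apply_chan W P y)^2 / apply_chan W P y
      \<le> (\<Sum>x\<in>UNIV. W y x * ((R x - P x)^2 / P x))" for y
  proof -
    define a where "a x = sqrt (W y x * P x)" for x
    define b where "b x = sqrt (W y x / P x) * (R x - P x)" for x
    have ab: "a x * b x = W y x * (R x - P x)" for x
    proof -
      have "sqrt (W y x * P x) * sqrt (W y x / P x) = sqrt ((W y x)^2)"
        using P[of x] by (simp add: real_sqrt_mult[symmetric] power2_eq_square)
      thus ?thesis using W(1) unfolding a_def b_def by (simp add: mult.assoc)
    qed
    have "apply_chan W R y - apply_chan W P y = (\<Sum>x\<in>UNIV. a x * b x)"
      unfolding ab apply_chan_def by (simp add: sum_subtractf algebra_simps)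
    hence "(apply_chan W R y - apply_chan W P y)^2 = (\<Sum>x\<in>UNIV. a x * b x)^2"
      by simp
    also have "\<dots> \<le> (\<Sum>x\<in>UNIV. (a x)^2) * (\<Sum>x\<in>UNIV. (b x)^2)"
      by (rule Cauchy_Schwarz_ineq_sum)
    also have "\<dots> = apply_chan W P y * (\<Sum>x\<in>UNIV. W y x * ((R x - P x)^2 / P x))"
      unfolding a_def b_def apply_chan_def using W(1) P
      by (simp add: power_mult_distrib less_imp_le)
    finally show ?thesis
      using WP[of y] by (simp add: divide_le_eq mult.commute)
  qed
  have "chi2_div (apply_chan W R) (apply_chan W P)
      \<le> (\<Sum>y\<in>UNIV. \<Sum>x\<in>UNIV. W y x * ((R x - P x)^2 / P x))"
    unfolding chi2_div_def by (rule sum_mono) (rule term_le)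
  also have "\<dots> = (\<Sum>x\<in>UNIV. (\<Sum>y\<in>UNIV. W y x) * ((R x - P x)^2 / P x))"
    by (subst sum.swap) (simp only: sum_distrib_right)
  also have "\<dots> = chi2_div R P"
    using W(2) unfolding chi2_div_def by simp
  finally show ?thesis .
qed

lemma ratio_le_contraction_coeff:
  assumes R: "is_pmf R" "0 < DvX R PX"
    and bound: "\<And>R. is_pmf R \<Longrightarrow> DvY (apply_chan W R) (apply_chan W PX) \<le> B * DvX R PX"
  shows "DvY (apply_chan W R) (apply_chan W PX) / DvX R PX \<le> contraction_coeff DvX DvY PX W"
  unfolding contraction_coeff_def
proof (rule cSup_upper)
  show "bdd_above {DvY (apply_chan W R) (apply_chan W PX) / DvX R PX | R. is_pmf R \<and> 0 < DvX R PX}"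
    using bound by (intro bdd_aboveI[of _ B]) (auto simp: divide_le_eq)
qed (use R in blast)

lemma contraction_coeff_le:
  assumes "\<exists>R. is_pmf R \<and> 0 < DvX R PX"
    and "\<And>R. is_pmf R \<Longrightarrow> 0 < DvX R PX \<Longrightarrow>
      DvY (apply_chan W R) (apply_chan W PX) \<le> B * DvX R PX"
  shows "contraction_coeff DvX DvY PX W \<le> B"
  unfolding contraction_coeff_def
  by (rule cSup_least) (use assms in \<open>auto simp: divide_le_eq\<close>)

lemma max_balanced_prob_pos:
  fixes P :: "'a::finite \<Rightarrow> real" and x0 x1 :: 'a
  assumes P: "is_pmf P" "\<And>x. 0 < P x" and "x0 \<noteq> x1"
  shows "0 < max_balanced_prob P"
proof -
  have "P x1 \<le> (\<Sum>x\<in>-{x0}. P x)"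
    using assms by (intro member_le_sum) (auto simp: less_imp_le)
  moreover have "P x0 + (\<Sum>x\<in>-{x0}. P x) = 1"
    using sum_Compl_split[of P "{x0}"] P by (simp add: is_pmf_def)
  ultimately have "0 < 1 - set_prob P {x0}"
    using P(2)[of x1] by (simp add: set_prob_def)
  moreover have "0 < set_prob P {x0}"
    using P by (simp add: set_prob_def)
  ultimately show ?thesis
    using balanced_prob_le_max[of P "{x0}"] by linarith
qed

locale finite_channel =
  fixes P :: "'x::finite \<Rightarrow> real" and W :: "'y::finite \<Rightarrow> 'x \<Rightarrow> real"
  assumes input_pmf: "is_pmf P" and input_pos: "\<And>x. 0 < P x"
    and chan_nonneg: "\<And>y x. 0 \<le> W y x" and chan_stochastic: "\<And>x. (\<Sum>y\<in>UNIV. W y x) = 1"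
    and output_pos: "\<And>y. 0 < apply_chan W P y"
    and two_le_card: "2 \<le> CARD('x)"
begin

lemma output_pmf: "is_pmf R \<Longrightarrow> is_pmf (apply_chan W R)"
  by (rule apply_chan_pmf[OF chan_nonneg chan_stochastic])

lemma chi2_div_output_le: "chi2_div (apply_chan W R) (apply_chan W P) \<le> chi2_div R P"
  by (rule chi2_div_apply_chan_le[OF chan_nonneg chan_stochastic input_pos output_pos])

lemma two_inputs: obtains x0 x1 :: 'x where "x0 \<noteq> x1"
proof -
  have "\<not> (\<forall>x0 x1 :: 'x. x0 = x1)"
  proof
    assume "\<forall>x0 x1 :: 'x. x0 = x1"
    hence "(UNIV :: 'x set) = {undefined}"
      by auto
    hence "CARD('x) = 1"
      by (metis card.empty card_insert_disjoint empty_iff finite.emptyI One_nat_def)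
    thus False
      using two_le_card by simp
  qed
  thus ?thesis
    using that by blast
qed

lemma exists_chi2_div_pos: "\<exists>R. is_pmf R \<and> 0 < chi2_div R P"
proof -
  obtain x0 x1 :: 'x where x01: "x0 \<noteq> x1"
    using two_inputs by blast
  define R where "R x = (if x = x0 then 1 else 0 :: real)" for x
  have "is_pmf R"
    by (simp add: is_pmf_def R_def)
  moreover have "R x1 \<noteq> P x1"
    using input_pos[of x1] x01 by (simp add: R_def)
  hence "R \<noteq> P" by auto
  ultimately show ?thesis
    using chi2_div_pos input_pos by blast
qed

lemma phi_Min_pos: "0 < phi (max_balanced_prob P) * Min (range P)"
proof -
  obtain x0 x1 :: 'x where "x0 \<noteq> x1"
    using two_inputs by blast
  hence "0 < max_balanced_prob P"
    by (rule max_balanced_prob_pos[OF input_pmf input_pos])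
  hence "2 \<le> phi (max_balanced_prob P)"
    using two_le_phi max_balanced_prob_le_half by blast
  moreover have "0 < Min (range P)"
    using input_pos by (subst Min_gr_iff) auto
  ultimately show ?thesis by simp
qed

lemma chi2_div_output_le_eta_chi2:
  assumes R: "is_pmf R"
  shows "chi2_div (apply_chan W R) (apply_chan W P) \<le> eta_chi2 P W * chi2_div R P"
proof (cases "0 < chi2_div R P")
  case True
  have "chi2_div (apply_chan W R) (apply_chan W P) / chi2_div R P \<le> eta_chi2 P W"
    unfolding eta_chi2_def
    by (rule ratio_le_contraction_coeff[where B = 1]) (use chi2_div_output_le R True in auto)
  thus ?thesis
    using True by (simp add: divide_le_eq)
next
  case False
  hence "chi2_div R P = 0"
    using chi2_div_nonneg[of P R] input_pos by simp
  thus ?thesis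
    using chi2_div_output_le[of R] by simp
qed

lemma eta_chi2_nonneg: "0 \<le> eta_chi2 P W"
proof -
  obtain R where R: "is_pmf R" "0 < chi2_div R P"
    using exists_chi2_div_pos by blast
  have "0 \<le> chi2_div (apply_chan W R) (apply_chan W P)"
    by (rule chi2_div_nonneg) (rule output_pos)
  hence "0 \<le> eta_chi2 P W * chi2_div R P"
    using chi2_div_output_le_eta_chi2[OF R(1)] by linarith
  thus ?thesis
    using R(2) by (simp add: zero_le_mult_iff)
qed

lemma KL_div_output_le:
  assumes R: "is_pmf R"
  shows "KL_div (apply_chan W R) (apply_chan W P)
           \<le> 2 * eta_chi2 P W / (phi (max_balanced_prob P) * Min (range P)) * KL_div R P"
proof -
  have "KL_div (apply_chan W R) (apply_chan W P) \<le> chi2_div (apply_chan W R) (apply_chan W P)"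
    using KL_div_le_chi2_div output_pmf R input_pmf output_pos by blast
  also have "\<dots> \<le> eta_chi2 P W * chi2_div R P"
    by (rule chi2_div_output_le_eta_chi2[OF R])
  also have "\<dots> \<le> eta_chi2 P W * (2 * KL_div R P / (phi (max_balanced_prob P) * Min (range P)))"
    using chi2_div_le_KL_div[OF R input_pmf input_pos] phi_Min_pos eta_chi2_nonneg
    by (intro mult_left_mono) (simp_all add: le_divide_eq)
  finally show ?thesis
    by (simp add: mult.commute mult.left_commute)
qed

lemma eta_KL_le: "eta_KL P W \<le> 2 * eta_chi2 P W / (phi (max_balanced_prob P) * Min (range P))"
  unfolding eta_KL_def
proof (rule contraction_coeff_le)
  obtain R where R: "is_pmf R" "0 < chi2_div R P"
    using exists_chi2_div_pos by blast
  hence "0 < chi2_div R P * (phi (max_balanced_prob P) * Min (range P))"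
    using phi_Min_pos by simp
  hence "0 < KL_div R P"
    using chi2_div_le_KL_div[OF R(1) input_pmf input_pos] by linarith
  thus "\<exists>R. is_pmf R \<and> 0 < KL_div R P"
    using R(1) by blast
qed (rule KL_div_output_le)

lemma chi2_ratio_le_eta_KL:
  assumes R: "is_pmf R" "0 < chi2_div R P"
  shows "chi2_div (apply_chan W R) (apply_chan W P) / chi2_div R P \<le> eta_KL P W"
proof -
  define Q where "Q e = (\<lambda>x. P x + e * (R x - P x))" for e :: real
  have "(\<Sum>x\<in>UNIV. R x - P x) = 0"
    using R(1) input_pmf by (simp add: sum_subtractf is_pmf_def)
  hence in_lim: "((\<lambda>e. KL_div (Q e) P / e^2) \<longlongrightarrow> chi2_div R P / 2) (at_right 0)"
    using tendsto_KL_div_perturb[of P "\<lambda>x. R x - P x", OF input_pos] unfolding Q_def by simp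
  have "(\<Sum>y\<in>UNIV. apply_chan W R y - apply_chan W P y) = 0"
    using output_pmf[OF R(1)] output_pmf[OF input_pmf] by (simp add: sum_subtractf is_pmf_def)
  hence out_lim: "((\<lambda>e. KL_div (apply_chan W (Q e)) (apply_chan W P) / e^2)
      \<longlongrightarrow> chi2_div (apply_chan W R) (apply_chan W P) / 2) (at_right 0)"
    using tendsto_KL_div_perturb[of "apply_chan W P" "\<lambda>y. apply_chan W R y - apply_chan W P y",
        OF output_pos]
    unfolding Q_def apply_chan_mix by simp
  have "eventually (\<lambda>e. 0 < KL_div (Q e) P / e^2 \<and> e \<in> {0<..<1}) (at_right 0)"
    using order_tendstoD(1)[OF in_lim, of 0] R(2) eventually_at_right_real[of 0 1]
    by (auto intro: eventually_conj)
  hence ev: "eventually (\<lambda>e. (KL_div (apply_chan W (Q e)) (apply_chan W P) / e^2)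
      / (KL_div (Q e) P / e^2) \<le> eta_KL P W) (at_right 0)"
  proof (rule eventually_mono)
    fix e :: real assume e: "0 < KL_div (Q e) P / e^2 \<and> e \<in> {0<..<1}"
    hence "is_pmf (Q e)" "0 < KL_div (Q e) P"
      using is_pmf_mix[OF input_pmf R(1)] by (auto simp: Q_def zero_less_divide_iff)
    hence "KL_div (apply_chan W (Q e)) (apply_chan W P) / KL_div (Q e) P \<le> eta_KL P W"
      unfolding eta_KL_def by (rule ratio_le_contraction_coeff) (rule KL_div_output_le)
    thus "(KL_div (apply_chan W (Q e)) (apply_chan W P) / e^2) / (KL_div (Q e) P / e^2) \<le> eta_KL P W"
      using e by simp
  qed
  have lim: "((\<lambda>e. (KL_div (apply_chan W (Q e)) (apply_chan W P) / e^2) / (KL_div (Q e) P / e^2))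
      \<longlongrightarrow> (chi2_div (apply_chan W R) (apply_chan W P) / 2) / (chi2_div R P / 2)) (at_right 0)"
    by (rule tendsto_divide[OF out_lim in_lim]) (use R(2) in simp)
  have "(chi2_div (apply_chan W R) (apply_chan W P) / 2) / (chi2_div R P / 2) \<le> eta_KL P W"
    by (rule tendsto_upperbound[OF lim ev]) simp
  thus ?thesis by simp
qed

lemma eta_chi2_le_eta_KL: "eta_chi2 P W \<le> eta_KL P W"
  unfolding eta_chi2_def
proof (rule contraction_coeff_le)
  fix R assume "is_pmf R" "0 < chi2_div R P"
  thus "chi2_div (apply_chan W R) (apply_chan W P) \<le> eta_KL P W * chi2_div R P"
    using chi2_ratio_le_eta_KL by (simp add: divide_le_eq)
qed (rule exists_chi2_div_pos)

end

lemma apply_chan_marg_X: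
  assumes "\<And>x. 0 < marg_X PXY x"
  shows "apply_chan (chan PXY) (marg_X PXY) = marg_Y PXY"
  using assms by (auto simp: apply_chan_def chan_def marg_Y_def less_imp_neq[symmetric])

lemma finite_channel_of_joint_pmf:
  fixes PXY :: "'x::finite \<Rightarrow> 'y::finite \<Rightarrow> real"
  assumes "CARD('x) \<ge> 2" and "\<forall>x y. 0 \<le> PXY x y"
    and "(\<Sum>x\<in>UNIV. \<Sum>y\<in>UNIV. PXY x y) = 1"
    and "\<forall>x. marg_X PXY x > 0" and "\<forall>y. marg_Y PXY y > 0"
  shows "finite_channel (marg_X PXY) (chan PXY)"
proof
  show "is_pmf (marg_X PXY)"
    using assms by (auto simp: is_pmf_def marg_X_def less_imp_le)
  show "(\<Sum>y\<in>UNIV. chan PXY y x) = 1" for x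
    using assms(4) by (simp add: chan_def sum_divide_distrib[symmetric] marg_X_def[symmetric]
        less_imp_neq[symmetric])
  show "0 < apply_chan (chan PXY) (marg_X PXY) y" for y
    using assms(4,5) by (simp add: apply_chan_marg_X)
qed (use assms in \<open>auto simp: chan_def less_imp_le\<close>)

theorem theorem3:
  fixes PXY :: "'x::finite \<Rightarrow> 'y::finite \<Rightarrow> real"
  assumes "CARD('x) \<ge> 2" and "CARD('y) \<ge> 2"
    and "\<forall>x y. 0 \<le> PXY x y"
    and "(\<Sum>x\<in>UNIV. \<Sum>y\<in>UNIV. PXY x y) = 1"
    and "\<forall>x. marg_X PXY x > 0"
    and "\<forall>y. marg_Y PXY y > 0"
  shows "eta_chi2 (marg_X PXY) (chan PXY) \<le> eta_KL (marg_X PXY) (chan PXY)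
    \<and> eta_KL (marg_X PXY) (chan PXY)
      \<le> 2 * eta_chi2 (marg_X PXY) (chan PXY) /
        (phi (Max ((\<lambda>A. min (set_prob (marg_X PXY) A) (1 - set_prob (marg_X PXY) A)) ` UNIV))
         * Min (range (marg_X PXY)))"
proof -
  interpret finite_channel "marg_X PXY" "chan PXY"
    using finite_channel_of_joint_pmf[of PXY] assms by blast
  show ?thesis
    using eta_chi2_le_eta_KL eta_KL_le unfolding max_balanced_prob_def by blast
qed

end
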